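(* For all $x\ge 1$ (and $n\ge x$), the $(x,x)$ edge-addition process on $n$ vertices always results in an $(x,x)$ task-dependency graph.
   Context: A task-dependency graph is a finite directed acyclic graph (no loops, no multiple edges). A vertex is initial if it has in-degree $0$ and terminal if it has out-degree $0$ (an isolated vertex is both). An $(x,y)$ task-dependency graph has exactly $x$ initial and exactly $y$ terminal vertices. The $(x,y)$ edge-addition process on $n$ vertices: start with the empty graph on $\{1,\dots,n\}$ and repeatedly add, uniformly at random, an edge $(a,b)$ with $a<b$ not yet present; if an addition would cause fewer than $x$ initial vertices or fewer than $y$ terminal vertices, it is cancelled. The process halts if the graph after some edge addition is an $(x,y)$ task-dependency graph, or if no more edges can be added; the result is the final graph. *)

theory Defs
  imports Main
begin

text \<open>Graphs on the vertex set {1..n}; edges (a,b) with a < b (hence acyclic, no loops,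
no multiple edges since the edge set is a set).\<close>

definition initial_vertices :: "nat \<Rightarrow> (nat \<times> nat) set \<Rightarrow> nat set" where
  "initial_vertices n E = {v \<in> {1..n}. \<not> (\<exists>u. (u, v) \<in> E)}"

definition terminal_vertices :: "nat \<Rightarrow> (nat \<times> nat) set \<Rightarrow> nat set" where
  "terminal_vertices n E = {v \<in> {1..n}. \<not> (\<exists>w. (v, w) \<in> E)}"

definition is_tdg :: "nat \<Rightarrow> nat \<Rightarrow> nat \<Rightarrow> (nat \<times> nat) set \<Rightarrow> bool" where
  "is_tdg x y n E \<longleftrightarrow> card (initial_vertices n E) = x \<and> card (terminal_vertices n E) = y"

definition addable :: "nat \<Rightarrow> nat \<Rightarrow> nat \<Rightarrow> (nat \<times> nat) set \<Rightarrow> nat \<times> nat \<Rightarrow> bool" where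
  "addable x y n E e \<longleftrightarrow> (case e of (a, b) \<Rightarrow>
     1 \<le> a \<and> a < b \<and> b \<le> n \<and> (a, b) \<notin> E \<and>
     x \<le> card (initial_vertices n (insert (a, b) E)) \<and>
     y \<le> card (terminal_vertices n (insert (a, b) E)))"

definition halted :: "nat \<Rightarrow> nat \<Rightarrow> nat \<Rightarrow> (nat \<times> nat) set \<Rightarrow> bool" where
  "halted x y n E \<longleftrightarrow> (E \<noteq> {} \<and> is_tdg x y n E) \<or> \<not> (\<exists>e. addable x y n E e)"

text \<open>Graphs reachable with positive probability in the (x,y) edge-addition process.\<close>
inductive reachable :: "nat \<Rightarrow> nat \<Rightarrow> nat \<Rightarrow> (nat \<times> nat) set \<Rightarrow> bool"
  for x y n where
  start: "reachable x y n {}"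
| step: "reachable x y n E \<Longrightarrow> \<not> halted x y n E \<Longrightarrow> addable x y n E e
          \<Longrightarrow> reachable x y n (insert e E)"

end

theory Submission
  imports Defs
begin

text \<open>Adding the edge (a, b) only removes b from the initial and a from the terminal
vertices, so at most one of each. While the graph is not an (x, x) graph, one of the two
counts exceeds x. If both do, any missing edge may be added, and one is missing since the
complete graph has a single initial vertex. If only the initial count exceeds x, any missing
edge leaving a non-terminal vertex may be added; if there is none, the least non-terminal
vertex a has an edge to every later vertex, so all initial vertices lie in {1..a} while
1, ..., a - 1 and n are terminal, and the initial count is at most the terminal one, x.
The remaining case is the mirror image under v \<mapsto> n + 1 - v with all edges reversed.\<close>

definition increasing_pairs :: "nat \<Rightarrow> (nat \<times> nat) set" where
  "increasing_pairs n = {(a, b). 1 \<le> a \<and> a < b \<and> b \<le> n}"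

lemma initial_vertices_insert:
  "initial_vertices n (insert (a, b) E) = initial_vertices n E - {b}"
  by (auto simp: initial_vertices_def)

lemma terminal_vertices_insert:
  "terminal_vertices n (insert (a, b) E) = terminal_vertices n E - {a}"
  by (auto simp: terminal_vertices_def)

lemma initial_vertices_subset: "initial_vertices n E \<subseteq> {1..n}"
  by (auto simp: initial_vertices_def)

lemma terminal_vertices_subset: "terminal_vertices n E \<subseteq> {1..n}"
  by (auto simp: terminal_vertices_def)

lemma finite_initial_vertices [simp]: "finite (initial_vertices n E)"
  using finite_subset[OF initial_vertices_subset] by blast

lemma finite_terminal_vertices [simp]: "finite (terminal_vertices n E)"
  using finite_subset[OF terminal_vertices_subset] by blast

lemma addable_iff:
  "addable x y n E (a, b) \<longleftrightarrow> (a, b) \<in> increasing_pairs n - E \<and>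
     x \<le> card (initial_vertices n E - {b}) \<and> y \<le> card (terminal_vertices n E - {a})"
  by (auto simp: addable_def increasing_pairs_def initial_vertices_insert terminal_vertices_insert)

lemma reachable_subset_increasing_pairs:
  "reachable x y n E \<Longrightarrow> E \<subseteq> increasing_pairs n"
  by (induction rule: reachable.induct) (auto simp: addable_def increasing_pairs_def)

lemma reachable_card_bounds:
  assumes "reachable x y n E" "x \<le> n" "y \<le> n"
  shows "x \<le> card (initial_vertices n E) \<and> y \<le> card (terminal_vertices n E)"
  using assms
proof (induction rule: reachable.induct)
  case start
  have "initial_vertices n {} = {1..n}" "terminal_vertices n {} = {1..n}"
    by (auto simp: initial_vertices_def terminal_vertices_def)
  with start show ?case by simp
next
  case (step E e)
  then show ?case by (auto simp: addable_def)
qed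

lemma initial_vertices_of_complete:
  assumes "increasing_pairs n \<subseteq> E"
  shows "initial_vertices n E \<subseteq> {1}"
proof
  fix v assume "v \<in> initial_vertices n E"
  then have "v \<in> {1..n}" "(1, v) \<notin> E" by (auto simp: initial_vertices_def)
  moreover have "(1, v) \<in> E" if "1 < v"
    using assms that \<open>v \<in> {1..n}\<close> by (auto simp: increasing_pairs_def)
  ultimately show "v \<in> {1}" by force
qed

lemma card_initial_le_card_terminal:
  assumes E: "E \<subseteq> increasing_pairs n"
    and missing_from_terminal: "\<forall>(a, b) \<in> increasing_pairs n - E. a \<in> terminal_vertices n E"
  shows "card (initial_vertices n E) \<le> card (terminal_vertices n E)"
proof (cases "{1..n} \<subseteq> terminal_vertices n E")
  case True
  then show ?thesis
    using initial_vertices_subset terminal_vertices_subset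
    by (metis card_mono finite_atLeastAtMost subset_antisym)
next
  case False
  define a where "a = Min ({1..n} - terminal_vertices n E)"
  from False have "a \<in> {1..n} - terminal_vertices n E"
    unfolding a_def by (intro Min_in) auto
  then have a: "a \<in> {1..n}" "a \<notin> terminal_vertices n E" by auto
  have below_a: "v \<in> terminal_vertices n E" if "v \<in> {1..<a}" for v
    using that a Min_le[of "{1..n} - terminal_vertices n E" v] unfolding a_def by fastforce
  from a obtain w where "(a, w) \<in> E" by (auto simp: terminal_vertices_def)
  with E have "a < n" by (auto simp: increasing_pairs_def)
  have "n \<in> terminal_vertices n E"
    using E \<open>a < n\<close> a by (auto simp: terminal_vertices_def increasing_pairs_def)
  have "initial_vertices n E \<subseteq> {1..a}"
  proof
    fix v assume v: "v \<in> initial_vertices n E"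
    then have "(a, v) \<notin> E" "v \<in> {1..n}" by (auto simp: initial_vertices_def)
    moreover have False if "a < v"
      using missing_from_terminal a that \<open>(a, v) \<notin> E\<close> \<open>v \<in> {1..n}\<close>
      by (auto simp: increasing_pairs_def)
    ultimately show "v \<in> {1..a}" by force
  qed
  then have "card (initial_vertices n E) \<le> a"
    by (metis card_atLeastAtMost card_mono diff_Suc_1 finite_atLeastAtMost)
  also have "a = card (insert n {1..<a})"
    using a \<open>a < n\<close> by simp
  also have "\<dots> \<le> card (terminal_vertices n E)"
    using below_a \<open>n \<in> terminal_vertices n E\<close> terminal_vertices_subset
    by (intro card_mono) auto
  finally show ?thesis .
qed

definition mirror :: "nat \<Rightarrow> nat \<Rightarrow> nat" where
  "mirror n v = Suc n - v"

definition mirror_graph :: "nat \<Rightarrow> (nat \<times> nat) set \<Rightarrow> (nat \<times> nat) set" where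
  "mirror_graph n E = (\<lambda>(a, b). (mirror n b, mirror n a)) ` E"

lemma mirror_mirror [simp]: "v \<le> Suc n \<Longrightarrow> mirror n (mirror n v) = v"
  by (simp add: mirror_def)

lemma mirror_in_range [simp]: "v \<in> {1..n} \<Longrightarrow> mirror n v \<in> {1..n}"
  by (auto simp: mirror_def)

lemma inj_on_mirror: "inj_on (mirror n) {1..n}"
  by (rule inj_on_inverseI[where g = "mirror n"]) simp

lemma mirror_graph_subset:
  "E \<subseteq> increasing_pairs n \<Longrightarrow> mirror_graph n E \<subseteq> increasing_pairs n"
  by (auto simp: mirror_graph_def mirror_def increasing_pairs_def)

lemma mem_mirror_graph_iff:
  assumes "E \<subseteq> increasing_pairs n" "a \<le> n" "b \<le> n"
  shows "(a, b) \<in> mirror_graph n E \<longleftrightarrow> (mirror n b, mirror n a) \<in> E"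
proof
  assume "(a, b) \<in> mirror_graph n E"
  then obtain c d where "(c, d) \<in> E" "a = mirror n d" "b = mirror n c"
    by (auto simp: mirror_graph_def)
  with assms(1) show "(mirror n b, mirror n a) \<in> E"
    by (auto simp: increasing_pairs_def)
next
  assume "(mirror n b, mirror n a) \<in> E"
  then have "(mirror n (mirror n a), mirror n (mirror n b)) \<in> mirror_graph n E"
    by (force simp: mirror_graph_def)
  with assms(2,3) show "(a, b) \<in> mirror_graph n E" by simp
qed

lemma mem_mirror_image_iff:
  "S \<subseteq> {1..n} \<Longrightarrow> v \<in> mirror n ` S \<longleftrightarrow> v \<in> {1..n} \<and> mirror n v \<in> S"
  by (force simp: mirror_def)

lemma initial_vertices_mirror_graph:
  assumes E: "E \<subseteq> increasing_pairs n"
  shows "initial_vertices n (mirror_graph n E) = mirror n ` terminal_vertices n E"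
proof -
  have "v \<in> initial_vertices n (mirror_graph n E) \<longleftrightarrow> mirror n v \<in> terminal_vertices n E"
    if "v \<in> {1..n}" for v
  proof -
    have "(\<exists>u. (u, v) \<in> mirror_graph n E) \<longleftrightarrow> (\<exists>w. (mirror n v, w) \<in> E)"
    proof
      assume "\<exists>u. (u, v) \<in> mirror_graph n E"
      then obtain u where "(u, v) \<in> mirror_graph n E" by blast
      moreover from this have "u \<le> n"
        using mirror_graph_subset[OF E] by (auto simp: increasing_pairs_def)
      ultimately show "\<exists>w. (mirror n v, w) \<in> E"
        using mem_mirror_graph_iff[OF E] that by auto
    next
      assume "\<exists>w. (mirror n v, w) \<in> E"
      then obtain w where "(mirror n v, w) \<in> E" by blast
      moreover from this have "w \<in> {1..n}"
        using E by (auto simp: increasing_pairs_def)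
      ultimately have "(mirror n w, v) \<in> mirror_graph n E"
        using mem_mirror_graph_iff[OF E, of "mirror n w" v] that by (auto simp: mirror_def)
      then show "\<exists>u. (u, v) \<in> mirror_graph n E" by blast
    qed
    with that mirror_in_range[OF that] show ?thesis
      unfolding initial_vertices_def terminal_vertices_def by blast
  qed
  then show ?thesis
    using mem_mirror_image_iff[OF terminal_vertices_subset] initial_vertices_subset by blast
qed

lemma mirror_graph_mirror_graph:
  assumes E: "E \<subseteq> increasing_pairs n"
  shows "mirror_graph n (mirror_graph n E) = E"
proof (rule set_eqI)
  fix p :: "nat \<times> nat"
  obtain a b where p: "p = (a, b)" by force
  have "mirror_graph n (mirror_graph n E) \<subseteq> increasing_pairs n"
    using E by (intro mirror_graph_subset)
  then have "p \<in> mirror_graph n (mirror_graph n E) \<Longrightarrow> a \<in> {1..n} \<and> b \<in> {1..n}"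
    and "p \<in> E \<Longrightarrow> a \<in> {1..n} \<and> b \<in> {1..n}"
    using E unfolding p increasing_pairs_def by auto
  moreover have "(a, b) \<in> mirror_graph n (mirror_graph n E) \<longleftrightarrow> (a, b) \<in> E"
    if "a \<in> {1..n}" "b \<in> {1..n}"
    using that mem_mirror_graph_iff[OF mirror_graph_subset[OF E], of a b]
      mem_mirror_graph_iff[OF E, of "mirror n b" "mirror n a"] mirror_in_range
    by auto
  ultimately show "p \<in> mirror_graph n (mirror_graph n E) \<longleftrightarrow> p \<in> E"
    unfolding p by blast
qed

lemma mirror_image_mirror_image: "S \<subseteq> {1..n} \<Longrightarrow> mirror n ` mirror n ` S = S"
  by (force simp: image_image subset_iff)

lemma terminal_vertices_mirror_graph:
  assumes E: "E \<subseteq> increasing_pairs n"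
  shows "terminal_vertices n (mirror_graph n E) = mirror n ` initial_vertices n E"
  using initial_vertices_mirror_graph[OF mirror_graph_subset[OF E]]
    mirror_image_mirror_image[OF terminal_vertices_subset]
  by (simp add: mirror_graph_mirror_graph[OF E])

lemma card_mirror_image: "S \<subseteq> {1..n} \<Longrightarrow> card (mirror n ` S) = card S"
  using card_image inj_on_mirror inj_on_subset by blast

lemma card_terminal_le_card_initial:
  assumes E: "E \<subseteq> increasing_pairs n"
    and missing_into_initial: "\<forall>(a, b) \<in> increasing_pairs n - E. b \<in> initial_vertices n E"
  shows "card (terminal_vertices n E) \<le> card (initial_vertices n E)"
proof -
  let ?F = "mirror_graph n E"
  have "\<forall>(a, b) \<in> increasing_pairs n - ?F. a \<in> terminal_vertices n ?F"
  proof clarify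
    fix a b assume ab: "(a, b) \<in> increasing_pairs n" "(a, b) \<notin> ?F"
    then have "(mirror n b, mirror n a) \<in> increasing_pairs n - E"
      using mem_mirror_graph_iff[OF E] by (auto simp: increasing_pairs_def mirror_def)
    with missing_into_initial have "mirror n a \<in> initial_vertices n E" by auto
    with ab show "a \<in> terminal_vertices n ?F"
      using terminal_vertices_mirror_graph[OF E] mem_mirror_image_iff[OF initial_vertices_subset]
      by (auto simp: increasing_pairs_def)
  qed
  from card_initial_le_card_terminal[OF mirror_graph_subset[OF E] this] show ?thesis
    by (simp add: initial_vertices_mirror_graph[OF E] terminal_vertices_mirror_graph[OF E]
        card_mirror_image[OF initial_vertices_subset] card_mirror_image[OF terminal_vertices_subset])
qed

lemma ex_addable_if_not_tdg:
  assumes E: "E \<subseteq> increasing_pairs n" and "1 \<le> x"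
    and "x \<le> card (initial_vertices n E)" "x \<le> card (terminal_vertices n E)"
    and "\<not> is_tdg x x n E"
  shows "\<exists>e. addable x x n E e"
proof -
  let ?I = "initial_vertices n E" and ?T = "terminal_vertices n E"
  have card_Diff_singleton_ge: "card S - 1 \<le> card (S - {v})" for S and v :: nat
    using diff_card_le_card_Diff[of "{v}" S] by simp
  consider (both) "x < card ?I" "x < card ?T" | (initial) "x < card ?I" "card ?T = x"
    | (terminal) "card ?I = x" "x < card ?T"
    using assms(3-5) unfolding is_tdg_def by linarith
  then show ?thesis
  proof cases
    case both
    have "\<not> increasing_pairs n \<subseteq> E"
    proof
      assume "increasing_pairs n \<subseteq> E"
      then have "card ?I \<le> card {1::nat}"
        by (intro card_mono initial_vertices_of_complete) simp
      with both \<open>1 \<le> x\<close> show False by simp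
    qed
    then obtain a b where "(a, b) \<in> increasing_pairs n - E" by auto
    with both have "addable x x n E (a, b)"
      using card_Diff_singleton_ge[of ?I b] card_Diff_singleton_ge[of ?T a]
      by (auto simp: addable_iff)
    then show ?thesis ..
  next
    case initial
    then have "\<not> card ?I \<le> card ?T" by simp
    then obtain a b where "(a, b) \<in> increasing_pairs n - E" "a \<notin> ?T"
      using card_initial_le_card_terminal[OF E] by blast
    with initial have "addable x x n E (a, b)"
      using card_Diff_singleton_ge[of ?I b] by (auto simp: addable_iff)
    then show ?thesis ..
  next
    case terminal
    then have "\<not> card ?T \<le> card ?I" by simp
    then obtain a b where "(a, b) \<in> increasing_pairs n - E" "b \<notin> ?I"
      using card_terminal_le_card_initial[OF E] by blast
    with terminal have "addable x x n E (a, b)"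
      using card_Diff_singleton_ge[of ?T a] by (auto simp: addable_iff)
    then show ?thesis ..
  qed
qed

theorem mainTheorem10:
  fixes x n :: nat and E :: "(nat \<times> nat) set"
  assumes "x \<ge> 1" and "n \<ge> x"
    and "reachable x x n E" and "halted x x n E"
  shows "is_tdg x x n E"
proof (rule ccontr)
  assume not_tdg: "\<not> is_tdg x x n E"
  have "E \<subseteq> increasing_pairs n"
    using assms(3) by (rule reachable_subset_increasing_pairs)
  moreover have "x \<le> card (initial_vertices n E)" "x \<le> card (terminal_vertices n E)"
    using reachable_card_bounds[OF assms(3)] assms(2) by auto
  ultimately have "\<exists>e. addable x x n E e"
    using ex_addable_if_not_tdg assms(1) not_tdg by blast
  with assms(4) not_tdg show False
    by (auto simp: halted_def)
qed

end
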